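(* Let $k\in\mathbb{N}$. The only isometric multiplication operators on $\mathcal{L}^{(k)}$, and the only isometric multiplication operators on $\mathcal{L}^{(k)}_0$, are those $M_\psi$ whose symbol $\psi$ is a constant function of modulus one.
   Context: $T$ is a tree (locally finite, connected, simply connected graph, identified with its vertex set) without terminal vertices, rooted at $o$. $|v|$ is the distance from $o$ to $v$; for $v\ne o$, $v^-$ is the parent of $v$. $T^*=T\setminus\{o\}$, $Df(v)=|f(v)-f(v^-)|$. For $x\ge1$: $\ell_0(x)=1$, $\ell_1(x)=1+\ln x$, $\ell_j(x)=1+\ln\ell_{j-1}(x)$ for $j\ge2$. $\mathcal{L}^{(k)}$ is the space of $f:T\to\mathbb{C}$ with $\sup_{v\in T^*}|v|\prod_{j=0}^{k-1}\ell_j(|v|)Df(v)<\infty$, normed by $\|f\|_k=|f(o)|+\sup_{v\in T^*}|v|\prod_{j=0}^{k-1}\ell_j(|v|)Df(v)$; $\mathcal{L}^{(k)}_0$ is its subspace of $f$ with $|v|\prod_{j=0}^{k-1}\ell_j(|v|)Df(v)\to0$ as $|v|\to\infty$. $M_\psi f=\psi f$; an isometric multiplication operator on $X$ is one with $M_\psi(X)\subseteq X$ and $\|\psi f\|_k=\|f\|_k$ for all $f\in X$. *)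

theory Defs
  imports Complex_Main
begin

text \<open>A rooted tree is encoded by its vertex type 'v (the vertex set T is UNIV),
  a root r and a parent map par (par v = v^- for v \<noteq> r; convention par r = r).
  Every vertex reaches the root by iterating par; hence the graph with edges
  {v, par v} (v \<noteq> r) is connected and simply connected.\<close>

definition is_rooted_tree :: "('v \<Rightarrow> 'v) \<Rightarrow> 'v \<Rightarrow> bool" where
  "is_rooted_tree par r \<longleftrightarrow> par r = r \<and> (\<forall>v. \<exists>n. (par ^^ n) v = r)"

definition children :: "('v \<Rightarrow> 'v) \<Rightarrow> 'v \<Rightarrow> 'v \<Rightarrow> 'v set" where
  "children par r v = {w. w \<noteq> r \<and> par w = v}"

definition degree :: "('v \<Rightarrow> 'v) \<Rightarrow> 'v \<Rightarrow> 'v \<Rightarrow> nat" where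
  "degree par r v = card (children par r v) + (if v = r then 0 else 1)"

definition good_tree :: "('v \<Rightarrow> 'v) \<Rightarrow> 'v \<Rightarrow> bool" where
  "good_tree par r \<longleftrightarrow> is_rooted_tree par r
     \<and> (\<forall>v. finite (children par r v))
     \<and> (\<forall>v. degree par r v \<noteq> 1)"

definition vlen :: "('v \<Rightarrow> 'v) \<Rightarrow> 'v \<Rightarrow> 'v \<Rightarrow> nat" where
  "vlen par r v = (LEAST n. (par ^^ n) v = r)"

fun ell :: "nat \<Rightarrow> real \<Rightarrow> real" where
  "ell 0 x = 1"
| "ell (Suc 0) x = 1 + ln x"
| "ell (Suc (Suc j)) x = 1 + ln (ell (Suc j) x)"

definition weight :: "nat \<Rightarrow> nat \<Rightarrow> real" where
  "weight k n = real n * (\<Prod>j<k. ell j (real n))"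

definition Df :: "('v \<Rightarrow> 'v) \<Rightarrow> ('v \<Rightarrow> complex) \<Rightarrow> 'v \<Rightarrow> real" where
  "Df par f v = cmod (f v - f (par v))"

definition wquot :: "('v \<Rightarrow> 'v) \<Rightarrow> 'v \<Rightarrow> nat \<Rightarrow> ('v \<Rightarrow> complex) \<Rightarrow> 'v \<Rightarrow> real" where
  "wquot par r k f v = weight k (vlen par r v) * Df par f v"

definition Lk :: "('v \<Rightarrow> 'v) \<Rightarrow> 'v \<Rightarrow> nat \<Rightarrow> ('v \<Rightarrow> complex) set" where
  "Lk par r k = {f. bdd_above (wquot par r k f ` {v. v \<noteq> r})}"

definition Lk0 :: "('v \<Rightarrow> 'v) \<Rightarrow> 'v \<Rightarrow> nat \<Rightarrow> ('v \<Rightarrow> complex) set" where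
  "Lk0 par r k = {f. f \<in> Lk par r k \<and>
      (\<forall>e>0. \<exists>N. \<forall>v. v \<noteq> r \<and> vlen par r v \<ge> N \<longrightarrow> wquot par r k f v < e)}"

text \<open>The norm; the supremum over T* is taken with 0 inserted (all terms are \<ge> 0),
  so that it is 0 when T* is empty.\<close>
definition normk :: "('v \<Rightarrow> 'v) \<Rightarrow> 'v \<Rightarrow> nat \<Rightarrow> ('v \<Rightarrow> complex) \<Rightarrow> real" where
  "normk par r k f = cmod (f r) + Sup (insert 0 (wquot par r k f ` {v. v \<noteq> r}))"

definition isometric_mult :: "('v \<Rightarrow> 'v) \<Rightarrow> 'v \<Rightarrow> nat \<Rightarrow> ('v \<Rightarrow> complex) set
    \<Rightarrow> ('v \<Rightarrow> complex) \<Rightarrow> bool" where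
  "isometric_mult par r k X psi \<longleftrightarrow>
     (\<forall>f\<in>X. (\<lambda>v. psi v * f v) \<in> X) \<and>
     (\<forall>f\<in>X. normk par r k (\<lambda>v. psi v * f v) = normk par r k f)"

end

theory Submission
  imports Defs
begin

text \<open>Multiplication by \<open>\<psi>\<close> sends the indicator of a vertex \<open>v\<close> to \<open>\<psi>(v)\<close> times that
  indicator; as the norm is absolutely homogeneous and indicators have positive norm,
  \<open>|\<psi>(v)| = 1\<close>. Multiplying the constant \<open>1\<close> gives \<open>\<psi>\<close> itself, so \<open>\<parallel>\<psi>\<parallel> = \<parallel>1\<parallel> = 1 = |\<psi>(o)|\<close>:
  the supremum part of the norm of \<open>\<psi>\<close> vanishes, hence \<open>\<psi>(v) = \<psi>(v\<^sup>-)\<close> for all \<open>v \<noteq> o\<close> and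
  \<open>\<psi>\<close> is constant. Local finiteness puts the indicators into the little space, so the same
  argument works for both spaces.\<close>

lemma ell_ge_1: "x \<ge> 1 \<Longrightarrow> ell j x \<ge> 1"
  by (induction j x rule: ell.induct) auto

lemma weight_pos: "n > 0 \<Longrightarrow> weight k n > 0"
  unfolding weight_def
  by (intro mult_pos_pos prod_pos) (auto intro: less_le_trans[OF _ ell_ge_1])

lemma rooted_tree_par_neq:
  assumes "is_rooted_tree par r" "v \<noteq> r"
  shows "par v \<noteq> v"
proof
  assume "par v = v"
  then have "(par ^^ n) v = v" for n
    by (induction n) auto
  then show False
    using assms unfolding is_rooted_tree_def by metis
qed

lemma rooted_tree_vlen_pos:
  assumes "is_rooted_tree par r" "v \<noteq> r"
  shows "vlen par r v > 0"
proof -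
  have "(par ^^ vlen par r v) v = r"
    unfolding vlen_def by (rule LeastI_ex) (use assms(1) in \<open>auto simp: is_rooted_tree_def\<close>)
  then show ?thesis
    using assms(2) by (cases "vlen par r v") auto
qed

lemma rooted_tree_par_invariant_const:
  assumes "is_rooted_tree par r" and par_inv: "\<And>w. w \<noteq> r \<Longrightarrow> f (par w) = f w"
  shows "f v = f r"
proof -
  have "f (par w) = f w" for w
    using par_inv assms(1) by (cases "w = r") (auto simp: is_rooted_tree_def)
  then have "f ((par ^^ n) v) = f v" for n
    by (induction n) auto
  moreover obtain n where "(par ^^ n) v = r"
    using assms(1) by (auto simp: is_rooted_tree_def)
  ultimately show ?thesis
    by metis
qed

lemma Sup_insert_0_cmult:
  fixes g :: "'a \<Rightarrow> real"
  assumes "c \<ge> 0" "bdd_above (g ` A)"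
  shows "Sup (insert 0 ((\<lambda>x. c * g x) ` A)) = c * Sup (insert 0 (g ` A))"
proof -
  have "c * Sup (insert 0 (g ` A)) = (SUP y\<in>insert 0 (g ` A). c * y)"
    using assms
    by (intro continuous_at_Sup_mono) (auto intro!: monoI mult_left_mono continuous_intros)
  then show ?thesis
    by (simp add: image_image)
qed

lemma wquot_cmult: "wquot par r k (\<lambda>w. a * f w) v = cmod a * wquot par r k f v"
  unfolding wquot_def Df_def
  by (simp add: right_diff_distrib[symmetric] norm_mult)

lemma normk_cmult:
  assumes "f \<in> Lk par r k"
  shows "normk par r k (\<lambda>w. a * f w) = cmod a * normk par r k f"
  using Sup_insert_0_cmult[of "cmod a" "wquot par r k f" "{v. v \<noteq> r}"] assms
  by (simp add: normk_def Lk_def wquot_cmult norm_mult distrib_left)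

lemma wquot_const: "wquot par r k (\<lambda>_. c) v = 0"
  by (simp add: wquot_def Df_def)

lemma const_in_Lk0: "(\<lambda>_. c) \<in> Lk0 par r k"
  by (simp add: Lk0_def Lk_def wquot_const image_constant_conv)

lemma Lk0_subset_Lk: "Lk0 par r k \<subseteq> Lk par r k"
  by (auto simp: Lk0_def)

lemma normk_const: "normk par r k (\<lambda>_. c) = cmod c"
  by (simp add: normk_def wquot_const image_constant_conv)

definition vertex_indicator :: "'v \<Rightarrow> 'v \<Rightarrow> complex" where
  "vertex_indicator v w = (if w = v then 1 else 0)"

lemma wquot_vertex_indicator_eq_0:
  assumes "w \<notin> insert v (children par r v)" "w \<noteq> r"
  shows "wquot par r k (vertex_indicator v) w = 0"
  using assms by (auto simp: wquot_def Df_def children_def vertex_indicator_def)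

lemma vertex_indicator_in_Lk0:
  assumes "good_tree par r"
  shows "vertex_indicator v \<in> Lk0 par r k"
proof -
  define F where "F = insert v (children par r v)"
  have "finite F"
    using assms by (auto simp: F_def good_tree_def)
  have outside_F: "wquot par r k (vertex_indicator v) w = 0" if "w \<notin> F" "w \<noteq> r" for w
    using wquot_vertex_indicator_eq_0 that unfolding F_def .
  have "wquot par r k (vertex_indicator v) ` {w. w \<noteq> r}
        \<subseteq> insert 0 (wquot par r k (vertex_indicator v) ` F)"
    using outside_F by blast
  then have "bdd_above (wquot par r k (vertex_indicator v) ` {w. w \<noteq> r})"
    by (rule bdd_above_mono[rotated]) (simp add: \<open>finite F\<close>)
  then have "vertex_indicator v \<in> Lk par r k"
    by (simp add: Lk_def)
  moreover have "wquot par r k (vertex_indicator v) w < e"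
    if "e > 0" "w \<noteq> r" "Suc (Max (vlen par r ` F)) \<le> vlen par r w" for e w
  proof -
    have "w \<notin> F"
    proof
      assume "w \<in> F"
      then have "vlen par r w \<le> Max (vlen par r ` F)"
        using \<open>finite F\<close> by simp
      with that(3) show False
        by simp
    qed
    then show ?thesis
      using outside_F that(1,2) by simp
  qed
  ultimately show ?thesis
    unfolding Lk0_def by blast
qed

lemma normk_vertex_indicator_pos:
  assumes "good_tree par r"
  shows "normk par r k (vertex_indicator v) > 0"
proof -
  have rooted: "is_rooted_tree par r"
    using assms by (simp add: good_tree_def)
  let ?S = "insert 0 (wquot par r k (vertex_indicator v) ` {w. w \<noteq> r})"
  have bdd: "bdd_above ?S"
    using vertex_indicator_in_Lk0[OF assms, of v k] by (simp add: Lk0_def Lk_def)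
  show ?thesis
  proof (cases "v = r")
    case True
    have "Sup ?S \<ge> 0"
      using bdd by (auto intro: cSup_upper)
    with True show ?thesis
      by (simp add: normk_def vertex_indicator_def)
  next
    case False
    have "0 < weight k (vlen par r v)"
      using weight_pos rooted_tree_vlen_pos[OF rooted False] .
    also have "\<dots> = wquot par r k (vertex_indicator v) v"
      using rooted_tree_par_neq[OF rooted False]
      by (simp add: wquot_def Df_def vertex_indicator_def)
    also have "\<dots> \<le> Sup ?S"
      using bdd False by (auto intro: cSup_upper)
    finally show ?thesis
      using False by (simp add: normk_def vertex_indicator_def)
  qed
qed

lemma par_invariant_if_normk_eq_root:
  assumes "is_rooted_tree par r" "f \<in> Lk par r k" "normk par r k f = cmod (f r)" "w \<noteq> r"
  shows "f (par w) = f w"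
proof -
  have "wquot par r k f w \<le> Sup (insert 0 (wquot par r k f ` {v. v \<noteq> r}))"
    using assms(2,4) by (auto simp: Lk_def intro: cSup_upper)
  also have "\<dots> = 0"
    using assms(3) by (simp add: normk_def)
  moreover have "weight k (vlen par r w) > 0"
    using weight_pos rooted_tree_vlen_pos[OF assms(1,4)] .
  ultimately have "Df par f w \<le> 0"
    by (simp add: wquot_def mult_le_0_iff)
  then show ?thesis
    by (simp add: Df_def)
qed

lemma isometric_mult_imp_unimodular_const:
  assumes tree: "good_tree par r" and "X \<subseteq> Lk par r k"
    and indicators: "\<And>v. vertex_indicator v \<in> X" and one: "(\<lambda>_. 1) \<in> X"
    and iso: "isometric_mult par r k X psi"
  shows "\<exists>c. cmod c = 1 \<and> psi = (\<lambda>_. c)"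
proof -
  have rooted: "is_rooted_tree par r"
    using tree by (simp add: good_tree_def)
  have unimodular: "cmod (psi v) = 1" for v
  proof -
    have "cmod (psi v) * normk par r k (vertex_indicator v)
        = normk par r k (\<lambda>w. psi v * vertex_indicator v w)"
      using indicators \<open>X \<subseteq> Lk par r k\<close> by (simp add: normk_cmult subset_iff)
    also have "(\<lambda>w. psi v * vertex_indicator v w) = (\<lambda>w. psi w * vertex_indicator v w)"
      by (auto simp: vertex_indicator_def)
    also have "normk par r k \<dots> = normk par r k (vertex_indicator v)"
      using iso indicators by (simp add: isometric_mult_def)
    finally have "cmod (psi v) * normk par r k (vertex_indicator v)
        = normk par r k (vertex_indicator v)" .
    then show ?thesis
      using normk_vertex_indicator_pos[OF tree, of k v] by simp
  qed
  have "psi \<in> X" "normk par r k psi = 1"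
    using iso one normk_const[of par r k 1] by (auto simp: isometric_mult_def)
  then have "psi (par w) = psi w" if "w \<noteq> r" for w
    using par_invariant_if_normk_eq_root[OF rooted] unimodular \<open>X \<subseteq> Lk par r k\<close> that by auto
  then have "psi = (\<lambda>_. psi r)"
    using rooted_tree_par_invariant_const[OF rooted] by blast
  with unimodular show ?thesis
    by blast
qed

lemma isometric_mult_const:
  assumes "cmod c = 1"
  shows "isometric_mult par r k (Lk par r k) (\<lambda>_. c)"
    and "isometric_mult par r k (Lk0 par r k) (\<lambda>_. c)"
  using assms
  by (auto simp: isometric_mult_def Lk_def Lk0_def normk_def wquot_cmult norm_mult)

theorem theorem5p1:
  fixes par :: "'v \<Rightarrow> 'v" and r :: 'v and k :: nat and psi :: "'v \<Rightarrow> complex"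
  assumes "good_tree par r"
  shows "(isometric_mult par r k (Lk par r k) psi \<longleftrightarrow> (\<exists>c. cmod c = 1 \<and> psi = (\<lambda>_. c)))
       \<and> (isometric_mult par r k (Lk0 par r k) psi \<longleftrightarrow> (\<exists>c. cmod c = 1 \<and> psi = (\<lambda>_. c)))"
proof -
  have "vertex_indicator v \<in> Lk par r k" for v
    using subsetD[OF Lk0_subset_Lk vertex_indicator_in_Lk0[OF assms]] .
  note unimodular_const_Lk =
    isometric_mult_imp_unimodular_const[OF assms order_refl this subsetD[OF Lk0_subset_Lk const_in_Lk0]]
  note unimodular_const_Lk0 =
    isometric_mult_imp_unimodular_const[OF assms Lk0_subset_Lk vertex_indicator_in_Lk0[OF assms] const_in_Lk0]
  show ?thesis
    using unimodular_const_Lk unimodular_const_Lk0 isometric_mult_const by auto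
qed

end
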